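(* Let $\ell,t,k,d,m$ be positive integers and let $\mathbb{F}$ be a finite field. Suppose that for some integer $b>\ell/k$ there is an $\mathbb{F}$-linear code $C\subseteq(\mathbb{F}^b)^k$ with rate at least $\ell/(kb)$ and distance at least $dt+1$. Then there is a $t$-private $k$-server linear HSS for $\mathsf{POLY}_{d,m}(\mathbb{F})^\ell$ (with $\mathsf{Share}$ being $t$-private CNF sharing) with download rate $\ell/(kb)$ and upload cost $k\ell m\binom{k-1}{t}\log_2|\mathbb{F}|$.
   Context: $\mathsf{POLY}_{d,m}(\mathbb{F})$ is the class of all polynomials in $\mathbb{F}[X_1,\dots,X_m]$ of total degree at most $d$, viewed as functions $\mathbb{F}^m\to\mathbb{F}$. For a class $\mathcal{F}$ of functions $\mathcal{X}^m\to\mathcal{Y}$, $\mathcal{F}^\ell$ is the class of functions $\mathcal{X}^{\ell m}\to\mathcal{Y}^\ell$ mapping $(x_{i,r})_{i\in[m],r\in[\ell]}$ to $(f_1(\mathbf{x}_1),\dots,f_\ell(\mathbf{x}_\ell))$, $\mathbf{x}_r=(x_{1,r},\dots,x_{m,r})$, $f_r\in\mathcal{F}$, with all $\ell m$ inputs shared independently. A $k$-server HSS $(\mathsf{Share},\mathsf{Eval},\mathsf{Rec})$: randomized $\mathsf{Share}$ maps each input to $k$ input shares; server $j$ computes output share $y^{(j)}=\mathsf{Eval}(f,j,\cdot)$ from its input shares; $\mathsf{Rec}(y^{(1)},\dots,y^{(k)})$ equals the function value with probability 1. $t$-private: any $\le t$ servers' input shares have a distribution independent of the input. $|w|=\log_2$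 of the size of $w$'s domain; upload cost $\sum_{i,j}|x_i^{(j)}|$; download cost $\sum_j|y^{(j)}|$; download rate $\log_2|\mathcal{Y}|/$download cost. Linear HSS: $\mathcal{X}=\mathbb{F}$, $\mathsf{Share}(x,\mathbf{r})$ $\mathbb{F}$-linear in $x$ and uniform random $\mathbf{r}$, output shares in $\mathbb{F}^{b_j}$, $\mathsf{Rec}$ $\mathbb{F}$-linear. $t$-private $k$-party CNF sharing of $x$: uniformly random $x_T$ for $T\subseteq[k]$, $|T|=t$, with $\sum_T x_T=x$; party $j$ gets $(x_T)_{j\notin T}$. $\mathbb{F}$-linear code $C\subseteq(\mathbb{F}^b)^k$: $\mathbb{F}$-subspace; rate $\dim_{\mathbb{F}}C/(bk)$; distance = minimum over distinct codewords of the number of coordinates $i\in[k]$ where they differ. *)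

theory Defs
  imports Complex_Main
begin

text \<open>A point of F^m is a function nat => F; only coordinates 0..m-1 matter.\<close>

definition exps :: "nat \<Rightarrow> nat \<Rightarrow> (nat \<Rightarrow> nat) set" where
  "exps d m = {e. (\<forall>i. m \<le> i \<longrightarrow> e i = 0) \<and> (\<Sum>i<m. e i) \<le> d}"

definition poly_fun :: "nat \<Rightarrow> nat \<Rightarrow> ((nat \<Rightarrow> 'a::comm_ring_1) \<Rightarrow> 'a) \<Rightarrow> bool" where
  "poly_fun d m f \<longleftrightarrow>
     (\<exists>c. f = (\<lambda>x. \<Sum>e\<in>exps d m. c e * (\<Prod>i<m. x i ^ e i)))"

definition cnf_sets :: "nat \<Rightarrow> nat \<Rightarrow> nat set set" where
  "cnf_sets k t = {T. T \<subseteq> {..<k} \<and> card T = t}"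

text \<open>Inputs x i r (i < m, r < l); share vector s i r T is the CNF share x_T of input x i r.
  The CNF sharings of x are exactly the share vectors (zero outside the relevant index range)
  whose shares sum to the input; Share picks one uniformly at random.\<close>

definition cnf_shares ::
  "nat \<Rightarrow> nat \<Rightarrow> nat \<Rightarrow> nat \<Rightarrow> (nat \<Rightarrow> nat \<Rightarrow> 'a::comm_monoid_add)
     \<Rightarrow> (nat \<Rightarrow> nat \<Rightarrow> nat set \<Rightarrow> 'a) set" where
  "cnf_shares k t l m x =
     {s. (\<forall>i r T. \<not> (i < m \<and> r < l \<and> T \<in> cnf_sets k t) \<longrightarrow> s i r T = 0) \<and>
         (\<forall>i<m. \<forall>r<l. (\<Sum>T\<in>cnf_sets k t. s i r T) = x i r)}"

text \<open>The joint view of a set S of servers: server j holds x_T exactly when j \<notin> T.\<close>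

definition cnf_view ::
  "nat \<Rightarrow> nat \<Rightarrow> nat \<Rightarrow> nat \<Rightarrow> nat set \<Rightarrow> (nat \<Rightarrow> nat \<Rightarrow> nat set \<Rightarrow> 'a::zero)
     \<Rightarrow> (nat \<Rightarrow> nat \<Rightarrow> nat set \<Rightarrow> 'a)" where
  "cnf_view k t l m S s =
     (\<lambda>i r T. if i < m \<and> r < l \<and> T \<in> cnf_sets k t \<and> \<not> S \<subseteq> T then s i r T else 0)"

text \<open>
  bs j = b_j: server j's output share lies in F^(bs j) (coordinates c < bs j).
  Eval j f v: output share of server j for function tuple f (f r = f_r for r < l)
    computed from the server's own input shares v.
  L r j c: coefficients of the F-linear reconstruction map F^(b_1+...+b_k) -> F^l.
  Correctness (probability 1) = for every possible CNF sharing.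
  t-privacy: for every set of at most t servers, the number of sharings of x producing a
    given joint view does not depend on x (the total number of sharings of x does not
    either), i.e. the view distribution is independent of the input.\<close>

definition linear_cnf_hss ::
  "nat \<Rightarrow> nat \<Rightarrow> nat \<Rightarrow> nat \<Rightarrow> nat \<Rightarrow> (nat \<Rightarrow> nat)
   \<Rightarrow> (nat \<Rightarrow> (nat \<Rightarrow> (nat \<Rightarrow> 'a::field) \<Rightarrow> 'a) \<Rightarrow> (nat \<Rightarrow> nat \<Rightarrow> nat set \<Rightarrow> 'a) \<Rightarrow> (nat \<Rightarrow> 'a))
   \<Rightarrow> (nat \<Rightarrow> nat \<Rightarrow> nat \<Rightarrow> 'a) \<Rightarrow> bool" where
  "linear_cnf_hss k t l d m bs Eval L \<longleftrightarrow>
     (\<forall>f. (\<forall>r<l. poly_fun d m (f r)) \<longrightarrow>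
        (\<forall>(x :: nat \<Rightarrow> nat \<Rightarrow> 'a). \<forall>s\<in>cnf_shares k t l m x. \<forall>r<l.
           (\<Sum>j<k. \<Sum>c<bs j. L r j c * Eval j f (cnf_view k t l m {j} s) c)
             = f r (\<lambda>i. x i r))) \<and>
     (\<forall>S. S \<subseteq> {..<k} \<longrightarrow> card S \<le> t \<longrightarrow>
        (\<forall>(x :: nat \<Rightarrow> nat \<Rightarrow> 'a) x' v.
           card {s \<in> cnf_shares k t l m x. cnf_view k t l m S s = v}
         = card {s \<in> cnf_shares k t l m x'. cnf_view k t l m S s = v}))"

text \<open>Costs, for a field with q elements. Each input share of server j for one input consists
  of the field elements x_T with j \<notin> T.\<close>

definition upload_cost :: "real \<Rightarrow> nat \<Rightarrow> nat \<Rightarrow> nat \<Rightarrow> nat \<Rightarrow> real" where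
  "upload_cost q k t l m =
     (\<Sum>r<l. \<Sum>i<m. \<Sum>j<k. real (card {T \<in> cnf_sets k t. j \<notin> T}) * log 2 q)"

definition download_cost :: "real \<Rightarrow> nat \<Rightarrow> (nat \<Rightarrow> nat) \<Rightarrow> real" where
  "download_cost q k bs = (\<Sum>j<k. real (bs j) * log 2 q)"

definition download_rate :: "real \<Rightarrow> nat \<Rightarrow> nat \<Rightarrow> (nat \<Rightarrow> nat) \<Rightarrow> real" where
  "download_rate q k l bs = real l * log 2 q / download_cost q k bs"

text \<open>A word is w :: nat => nat => F, w i c = entry c (< b) of coordinate i (< k).\<close>

definition words :: "nat \<Rightarrow> nat \<Rightarrow> (nat \<Rightarrow> nat \<Rightarrow> 'a::zero) set" where
  "words k b = {w. \<forall>i c. (k \<le> i \<or> b \<le> c) \<longrightarrow> w i c = 0}"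

definition linear_code :: "nat \<Rightarrow> nat \<Rightarrow> (nat \<Rightarrow> nat \<Rightarrow> 'a::field) set \<Rightarrow> bool" where
  "linear_code k b C \<longleftrightarrow> C \<subseteq> words k b \<and> (\<lambda>i c. 0) \<in> C \<and>
     (\<forall>u\<in>C. \<forall>v\<in>C. (\<lambda>i c. u i c + v i c) \<in> C) \<and> (\<forall>a. \<forall>u\<in>C. (\<lambda>i c. a * u i c) \<in> C)"

definition lin_indep_fam :: "nat \<Rightarrow> (nat \<Rightarrow> nat \<Rightarrow> nat \<Rightarrow> 'a::field) \<Rightarrow> bool" where
  "lin_indep_fam n v \<longleftrightarrow>
     (\<forall>a. (\<forall>i c. (\<Sum>p<n. a p * v p i c) = 0) \<longrightarrow> (\<forall>p<n. a p = 0))"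

definition code_dim :: "(nat \<Rightarrow> nat \<Rightarrow> 'a::field) set \<Rightarrow> nat" where
  "code_dim C = (GREATEST n. \<exists>v. (\<forall>p<n. v p \<in> C) \<and> lin_indep_fam n v)"

definition code_rate :: "nat \<Rightarrow> nat \<Rightarrow> (nat \<Rightarrow> nat \<Rightarrow> 'a::field) set \<Rightarrow> real" where
  "code_rate k b C = real (code_dim C) / (real b * real k)"

definition distance_at_least :: "nat \<Rightarrow> (nat \<Rightarrow> nat \<Rightarrow> 'a) set \<Rightarrow> nat \<Rightarrow> bool" where
  "distance_at_least k C D \<longleftrightarrow>
     (\<forall>u\<in>C. \<forall>w\<in>C. u \<noteq> w \<longrightarrow> D \<le> card {i. i < k \<and> u i \<noteq> w i})"

end

theory Submission
  imports Defs "HOL-Library.FuncSet"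
begin

(* Share every input by CNF sharing and use l linearly independent codewords A_0, ..., A_(l-1)
   of C as the linear reconstruction map. Expanding a monomial of degree at most d over the CNF
   shares of its variables gives products of at most d shares x_T; such a product is known to
   every server outside the union U of the sets T, and |U| <= d t. Because C has distance
   greater than d t, the A_s remain linearly independent after the coordinates in U are deleted,
   so there are vectors W_(U,r) vanishing on U whose pairing with A_s is the Kronecker delta
   (r, s). Server j outputs the sum of all products, each times the j-th block of its W_(U,r);
   pairing the output shares with A_r then returns f_r(x). Privacy: adding x' - x to the share
   x_T of one t-set T containing the corrupted servers maps the sharings of x bijectively onto
   those of x' and does not change what these servers see. *)

definition dot_on :: "'p set \<Rightarrow> ('p \<Rightarrow> 'a::comm_ring_1) \<Rightarrow> ('p \<Rightarrow> 'a) \<Rightarrow> 'a" where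
  "dot_on X u v = (\<Sum>p\<in>X. u p * v p)"

definition indep_on :: "'p set \<Rightarrow> nat \<Rightarrow> (nat \<Rightarrow> 'p \<Rightarrow> 'a::comm_ring_1) \<Rightarrow> bool" where
  "indep_on X n a \<longleftrightarrow> (\<forall>\<gamma>. (\<forall>p\<in>X. (\<Sum>s<n. \<gamma> s * a s p) = 0) \<longrightarrow> (\<forall>s<n. \<gamma> s = 0))"

lemma dot_on_commute: "dot_on X u v = dot_on X v u"
  unfolding dot_on_def by (simp add: mult.commute)

lemma dot_on_diff_right: "dot_on X u (\<lambda>p. v p - w p) = dot_on X u v - dot_on X u w"
  unfolding dot_on_def by (simp add: right_diff_distrib sum_subtractf)

lemma dot_on_scale_right: "dot_on X u (\<lambda>p. c * v p) = c * dot_on X u v"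
  unfolding dot_on_def by (simp add: sum_distrib_left mult.left_commute)

lemma dot_on_sum_right:
  "dot_on X u (\<lambda>p. \<Sum>r\<in>R. c r * w r p) = (\<Sum>r\<in>R. c r * dot_on X u (w r))"
  unfolding dot_on_def sum_distrib_left by (subst sum.swap) (simp add: mult.left_commute)

lemma indep_onD:
  "indep_on X n a \<Longrightarrow> \<forall>p\<in>X. (\<Sum>s<n. \<gamma> s * a s p) = 0 \<Longrightarrow> s < n \<Longrightarrow> \<gamma> s = 0"
  unfolding indep_on_def by blast

lemma indep_on_mono:
  assumes "indep_on X n a" "n' \<le> n"
  shows "indep_on X n' a"
  unfolding indep_on_def
proof (intro allI impI)
  fix \<gamma> s
  assume vanish: "\<forall>p\<in>X. (\<Sum>s<n'. \<gamma> s * a s p) = 0" and "s < n'"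
  let ?\<gamma> = "\<lambda>s. if s < n' then \<gamma> s else 0"
  have "(\<Sum>s<n. ?\<gamma> s * a s p) = (\<Sum>s<n'. ?\<gamma> s * a s p)" for p
    by (rule sum.mono_neutral_right) (use \<open>n' \<le> n\<close> in auto)
  then have "\<forall>p\<in>X. (\<Sum>s<n. ?\<gamma> s * a s p) = 0"
    using vanish by simp
  from indep_onD[OF assms(1) this, of s] show "\<gamma> s = 0"
    using \<open>s < n'\<close> \<open>n' \<le> n\<close> by simp
qed

lemma dual_vector_extend:
  fixes a :: "nat \<Rightarrow> 'p \<Rightarrow> 'a::field"
  assumes "finite X" "indep_on X (Suc n) a"
    and dual: "\<forall>r<n. \<forall>s<n. dot_on X (a s) (w r) = (if s = r then 1 else 0)"
  obtains z where "\<forall>s<n. dot_on X (a s) z = 0" "dot_on X (a n) z = 1"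
proof -
  (* res is a n minus its expansion along the earlier a s, nonzero at some p0 by independence;
     z is the point mass at p0 with its components along the old dual vectors removed *)
  define res where "res = (\<lambda>p. a n p - (\<Sum>r<n. dot_on X (a n) (w r) * a r p))"
  have "\<exists>p0\<in>X. res p0 \<noteq> 0"
  proof (rule ccontr)
    assume "\<not> ?thesis"
    then have res_zero: "\<forall>p\<in>X. res p = 0" by blast
    let ?\<gamma> = "\<lambda>s. if s < n then - dot_on X (a n) (w s) else 1"
    have "\<forall>p\<in>X. (\<Sum>s<Suc n. ?\<gamma> s * a s p) = 0"
      using res_zero by (simp add: res_def sum_negf)
    from indep_onD[OF assms(2) this, of n] show False by simp
  qed
  then obtain p0 where "p0 \<in> X" "res p0 \<noteq> 0" by blast
  define u where "u p = (if p = p0 then 1 / res p0 else 0)" for p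
  have dot_u: "dot_on X v u = v p0 / res p0" for v
    using \<open>p0 \<in> X\<close> \<open>finite X\<close> by (simp add: dot_on_def u_def if_distrib cong: if_cong)
  define z where "z = (\<lambda>p. u p - (\<Sum>r<n. dot_on X (a r) u * w r p))"
  show thesis
  proof
    show "\<forall>s<n. dot_on X (a s) z = 0"
    proof (intro allI impI)
      fix s assume "s < n"
      have "dot_on X (a s) z = dot_on X (a s) u - (\<Sum>r<n. dot_on X (a r) u * dot_on X (a s) (w r))"
        by (simp add: z_def dot_on_diff_right dot_on_sum_right)
      also have "(\<Sum>r<n. dot_on X (a r) u * dot_on X (a s) (w r)) = dot_on X (a s) u"
        using dual \<open>s < n\<close> by (simp add: if_distrib[of "(*) _"] cong: if_cong)
      finally show "dot_on X (a s) z = 0" by simp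
    qed
    have "dot_on X (a n) z = dot_on X (a n) u - (\<Sum>r<n. dot_on X (a r) u * dot_on X (a n) (w r))"
      by (simp add: z_def dot_on_diff_right dot_on_sum_right)
    also have "\<dots> = dot_on X u res"
    proof -
      have swap_u: "dot_on X u v = dot_on X v u" for v
        by (rule dot_on_commute)
      have "dot_on X u res = dot_on X u (a n) - (\<Sum>r<n. dot_on X (a n) (w r) * dot_on X u (a r))"
        unfolding res_def by (simp only: dot_on_diff_right dot_on_sum_right)
      then show ?thesis by (simp add: swap_u mult.commute)
    qed
    also have "\<dots> = 1"
      using \<open>res p0 \<noteq> 0\<close> by (simp add: dot_on_commute[of X u] dot_u)
    finally show "dot_on X (a n) z = 1" .
  qed
qed

lemma dual_basis_exists:
  fixes a :: "nat \<Rightarrow> 'p \<Rightarrow> 'a::field"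
  assumes "finite X" "indep_on X n a"
  shows "\<exists>w. \<forall>r<n. \<forall>s<n. dot_on X (a s) (w r) = (if s = r then 1 else 0)"
  using assms(2)
proof (induction n)
  case 0
  then show ?case by simp
next
  case (Suc n)
  then obtain w where dual: "\<forall>r<n. \<forall>s<n. dot_on X (a s) (w r) = (if s = r then 1 else 0)"
    using indep_on_mono[OF Suc.prems] by auto
  obtain z where z: "\<forall>s<n. dot_on X (a s) z = 0" "dot_on X (a n) z = 1"
    using dual_vector_extend[OF assms(1) Suc.prems dual] by blast
  (* the old dual vectors are corrected along z so that they become orthogonal to a n *)
  define w' where "w' r = (if r < n then (\<lambda>p. w r p - dot_on X (a n) (w r) * z p) else z)" for r
  have "dot_on X (a s) (w' r) = (if s = r then 1 else 0)" if "r < Suc n" "s < Suc n" for r s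
  proof (cases "r < n")
    case True
    then have "dot_on X (a s) (w' r) = dot_on X (a s) (w r) - dot_on X (a n) (w r) * dot_on X (a s) z"
      by (simp add: w'_def dot_on_diff_right dot_on_scale_right)
    moreover have "s < n \<or> s = n"
      using \<open>s < Suc n\<close> by linarith
    ultimately show ?thesis
      using True dual z by auto
  next
    case False
    then have "r = n" "w' r = z"
      using \<open>r < Suc n\<close> by (simp_all add: w'_def)
    moreover have "s < n \<or> s = n"
      using \<open>s < Suc n\<close> by linarith
    ultimately show ?thesis
      using z by auto
  qed
  then show ?case by blast
qed

lemma lin_indep_fam_iff_indep_on:
  "lin_indep_fam n v \<longleftrightarrow> indep_on UNIV n (\<lambda>s p. v s (fst p) (snd p))"
  unfolding lin_indep_fam_def indep_on_def by auto

lemma linear_code_zero: "linear_code k b C \<Longrightarrow> (\<lambda>i c. 0) \<in> C"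
  unfolding linear_code_def by blast

lemma linear_code_sum:
  fixes n :: nat
  assumes "linear_code k b C" "\<forall>s<n. v s \<in> C"
  shows "(\<lambda>i c. \<Sum>s<n. \<gamma> s * v s i c) \<in> C"
  using assms(2)
proof (induction n)
  case 0
  then show ?case using linear_code_zero[OF assms(1)] by simp
next
  case (Suc n)
  have add: "\<forall>u\<in>C. \<forall>w\<in>C. (\<lambda>i c. u i c + w i c) \<in> C"
    and scale: "\<forall>\<alpha>. \<forall>u\<in>C. (\<lambda>i c. \<alpha> * u i c) \<in> C"
    using assms(1) unfolding linear_code_def by simp_all
  have "(\<lambda>i c. \<Sum>s<n. \<gamma> s * v s i c) \<in> C" "(\<lambda>i c. \<gamma> n * v n i c) \<in> C"
    using Suc scale by simp_all
  from add[rule_format, OF this] show ?case by simp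
qed

lemma codeword_zero_if_support_small:
  assumes "linear_code k b C" "distance_at_least k C D" "u \<in> C"
    and "finite U" "card U < D" "\<forall>i<k. i \<notin> U \<longrightarrow> u i = (\<lambda>c. 0)"
  shows "u = (\<lambda>i c. 0)"
proof (rule ccontr)
  assume "u \<noteq> (\<lambda>i c. 0)"
  with assms(2,3) linear_code_zero[OF assms(1)]
  have "D \<le> card {i. i < k \<and> u i \<noteq> (\<lambda>c. 0)}"
    unfolding distance_at_least_def by simp
  also have "\<dots> \<le> card U"
    using assms(4,6) by (intro card_mono) auto
  finally show False using assms(5) by simp
qed

lemma distance_le_length:
  assumes "linear_code k b C" "distance_at_least k C D" "u \<in> C" "u \<noteq> (\<lambda>i c. 0)"
  shows "D \<le> k"
proof (rule ccontr)
  assume "\<not> D \<le> k"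
  then have "u = (\<lambda>i c. 0)"
    using codeword_zero_if_support_small[OF assms(1-3), of "{..<k}"] by simp
  with assms(4) show False ..
qed

lemma lin_indep_fam_nonzero:
  assumes "lin_indep_fam n v" "p < n"
  shows "v p \<noteq> (\<lambda>i c. 0)"
proof
  assume "v p = (\<lambda>i c. 0)"
  then have "(\<Sum>q<n. (if q = p then 1 else 0) * v q i c) = 0" for i c
    by (simp add: if_distrib[of "\<lambda>a. a * _"] cong: if_cong)
  from assms(1)[unfolded lin_indep_fam_def, rule_format, OF this assms(2)] show False
    by simp
qed

lemma exists_lin_indep_codewords:
  fixes C :: "(nat \<Rightarrow> nat \<Rightarrow> 'a::field) set"
  assumes "l \<le> code_dim C"
  obtains v where "\<forall>s<l. v s \<in> C" "lin_indep_fam l v"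
proof -
  let ?P = "\<lambda>n. \<exists>v. (\<forall>s<n. v s \<in> C) \<and> lin_indep_fam n v"
  have down: "?P n'" if "?P n" "n' \<le> n" for n n'
  proof -
    obtain v where "\<forall>s<n. v s \<in> C" "lin_indep_fam n v"
      using \<open>?P n\<close> by blast
    then have "\<forall>s<n'. v s \<in> C" "lin_indep_fam n' v"
      using \<open>n' \<le> n\<close> indep_on_mono by (auto simp: lin_indep_fam_iff_indep_on)
    then show ?thesis by blast
  qed
  have "?P l"
  proof (cases "\<exists>N. \<forall>n. ?P n \<longrightarrow> n \<le> N")
    case True
    then obtain N where "\<And>n. ?P n \<Longrightarrow> n \<le> N" by blast
    moreover have "?P 0" by (simp add: lin_indep_fam_def)
    ultimately have "?P (code_dim C)"
      unfolding code_dim_def by (rule GreatestI_nat[rotated])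
    then show ?thesis using down assms by blast
  next
    case False
    then obtain n where "?P n" "l \<le> n" by (meson nle_le)
    then show ?thesis using down by blast
  qed
  then show ?thesis using that by blast
qed

lemma indep_on_outside_small_set:
  fixes A :: "nat \<Rightarrow> nat \<Rightarrow> nat \<Rightarrow> 'a::field"
  assumes code: "linear_code k b C" "distance_at_least k C D"
    and basis: "\<forall>s<l. A s \<in> C" "lin_indep_fam l A"
    and U: "finite U" "card U < D"
  shows "indep_on {(j, c). j < k \<and> j \<notin> U \<and> c < b} l (\<lambda>s p. A s (fst p) (snd p))"
  unfolding indep_on_def
proof (intro allI impI)
  fix \<gamma> s
  assume vanish: "\<forall>p\<in>{(j, c). j < k \<and> j \<notin> U \<and> c < b}. (\<Sum>s<l. \<gamma> s * A s (fst p) (snd p)) = 0"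
    and "s < l"
  define u where "u = (\<lambda>i c. \<Sum>s<l. \<gamma> s * A s i c)"
  have "u \<in> C"
    unfolding u_def by (rule linear_code_sum[OF code(1) basis(1)])
  moreover have "u j = (\<lambda>c. 0)" if "j < k" "j \<notin> U" for j
  proof
    fix c
    show "u j c = 0"
    proof (cases "c < b")
      case True
      then show ?thesis using vanish that by (auto simp: u_def)
    next
      case False
      then show ?thesis
        using \<open>u \<in> C\<close> code(1) unfolding linear_code_def words_def by auto
    qed
  qed
  ultimately have "u = (\<lambda>i c. 0)"
    using codeword_zero_if_support_small[OF code _ U] by blast
  then have "\<forall>i c. (\<Sum>s<l. \<gamma> s * A s i c) = 0"
    unfolding u_def by meson
  then show "\<gamma> s = 0"
    using basis(2) \<open>s < l\<close> unfolding lin_indep_fam_def by blast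
qed

lemma dual_codewords_exist:
  fixes A :: "nat \<Rightarrow> nat \<Rightarrow> nat \<Rightarrow> 'a::field"
  assumes "linear_code k b C" "distance_at_least k C D" "\<forall>s<l. A s \<in> C" "lin_indep_fam l A"
    and "finite U" "card U < D"
  shows "\<exists>W. \<forall>r<l. (\<forall>j\<in>U. \<forall>c. W r j c = 0) \<and>
           (\<forall>s<l. (\<Sum>j<k. \<Sum>c<b. A s j c * W r j c) = (if s = r then 1 else 0))"
proof -
  define X where "X = {(j, c). j < k \<and> j \<notin> U \<and> c < b}"
  define a where "a s p = A s (fst p) (snd p)" for s p
  have grid: "X \<subseteq> {..<k} \<times> {..<b}"
    by (auto simp: X_def)
  have "indep_on X l a"
    unfolding X_def a_def by (rule indep_on_outside_small_set[OF assms])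
  then obtain w where dual: "\<forall>r<l. \<forall>s<l. dot_on X (a s) (w r) = (if s = r then 1 else 0)"
    using dual_basis_exists[of X] finite_subset[OF grid] by blast
  define W where "W r j c = (if (j, c) \<in> X then w r (j, c) else 0)" for r j c
  have "(\<Sum>j<k. \<Sum>c<b. A s j c * W r j c) = dot_on X (a s) (w r)" for s r
  proof -
    have "(\<Sum>j<k. \<Sum>c<b. A s j c * W r j c)
        = (\<Sum>p\<in>{..<k} \<times> {..<b}. A s (fst p) (snd p) * W r (fst p) (snd p))"
      by (simp add: sum.cartesian_product case_prod_beta)
    also have "\<dots> = (\<Sum>p\<in>{..<k} \<times> {..<b}. if p \<in> X then a s p * w r p else 0)"
      by (intro sum.cong) (auto simp: W_def a_def)
    also have "\<dots> = dot_on X (a s) (w r)"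
      by (simp add: sum.If_cases Int_absorb1[OF grid] dot_on_def)
    finally show ?thesis .
  qed
  moreover have "\<forall>j\<in>U. \<forall>c. W r j c = 0" for r
    by (simp add: W_def X_def)
  ultimately show ?thesis
    using dual by (intro exI[of _ W]) simp
qed

lemma finite_cnf_sets: "finite (cnf_sets k t)"
  unfolding cnf_sets_def by (rule finite_subset[of _ "Pow {..<k}"]) auto

lemma card_cnf_sets_avoiding:
  assumes "j < k"
  shows "card {T \<in> cnf_sets k t. j \<notin> T} = (k - 1) choose t"
proof -
  have "{T \<in> cnf_sets k t. j \<notin> T} = {T. T \<subseteq> {..<k} - {j} \<and> card T = t}"
    unfolding cnf_sets_def by auto
  moreover have "card ({..<k} - {j}) = k - 1"
    using assms by simp
  ultimately show ?thesis
    using n_subsets[of "{..<k} - {j}" t] by simp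
qed

lemma upload_cost_eq:
  "upload_cost q k t l m = real k * real l * real m * real ((k - 1) choose t) * log 2 q"
proof -
  have "(\<Sum>j<k. real (card {T \<in> cnf_sets k t. j \<notin> T}) * log 2 q)
      = (\<Sum>j<k. real ((k - 1) choose t) * log 2 q)"
    by (rule sum.cong) (auto simp: card_cnf_sets_avoiding)
  then show ?thesis
    unfolding upload_cost_def by (simp add: mult_ac)
qed

lemma cnf_set_containing:
  assumes "S \<subseteq> {..<k}" "card S \<le> t" "t \<le> k"
  obtains T0 where "T0 \<in> cnf_sets k t" "S \<subseteq> T0"
proof -
  have "finite S"
    using assms(1) finite_subset by blast
  have "t - card S \<le> card ({..<k} - S)"
    using card_Diff_subset[OF \<open>finite S\<close> assms(1)] assms(3) by simp
  then obtain T' where T': "T' \<subseteq> {..<k} - S" "card T' = t - card S" "finite T'"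
    by (rule obtain_subset_with_card_n)
  have "card (S \<union> T') = t"
    using card_Un_disjoint[OF \<open>finite S\<close> T'(3)] T' assms(2) by auto
  then have "S \<union> T' \<in> cnf_sets k t"
    using T'(1) assms(1) unfolding cnf_sets_def by blast
  then show thesis
    using that by blast
qed

definition cnf_shift ::
  "nat \<Rightarrow> nat \<Rightarrow> nat set \<Rightarrow> (nat \<Rightarrow> nat \<Rightarrow> 'a::ab_group_add)
     \<Rightarrow> (nat \<Rightarrow> nat \<Rightarrow> nat set \<Rightarrow> 'a) \<Rightarrow> (nat \<Rightarrow> nat \<Rightarrow> nat set \<Rightarrow> 'a)" where
  "cnf_shift l m T0 \<delta> s = (\<lambda>i r T. s i r T + (if i < m \<and> r < l \<and> T = T0 then \<delta> i r else 0))"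

lemma cnf_shift_shares:
  assumes "T0 \<in> cnf_sets k t" "s \<in> cnf_shares k t l m x"
  shows "cnf_shift l m T0 (\<lambda>i r. x' i r - x i r) s \<in> cnf_shares k t l m x'"
  unfolding cnf_shares_def mem_Collect_eq
proof (intro conjI allI impI)
  fix i r T
  assume "\<not> (i < m \<and> r < l \<and> T \<in> cnf_sets k t)"
  then show "cnf_shift l m T0 (\<lambda>i r. x' i r - x i r) s i r T = 0"
    using assms unfolding cnf_shares_def cnf_shift_def by auto
next
  fix i r
  assume "i < m" "r < l"
  then have "(\<Sum>T\<in>cnf_sets k t. cnf_shift l m T0 (\<lambda>i r. x' i r - x i r) s i r T)
      = (\<Sum>T\<in>cnf_sets k t. s i r T) + (x' i r - x i r)"
    using assms(1) finite_cnf_sets by (simp add: cnf_shift_def sum.distrib)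
  also have "\<dots> = x' i r"
    using assms(2) \<open>i < m\<close> \<open>r < l\<close> unfolding cnf_shares_def by simp
  finally show "(\<Sum>T\<in>cnf_sets k t. cnf_shift l m T0 (\<lambda>i r. x' i r - x i r) s i r T) = x' i r" .
qed

lemma cnf_view_shift:
  "S \<subseteq> T0 \<Longrightarrow> cnf_view k t l m S (cnf_shift l m T0 \<delta> s) = cnf_view k t l m S s"
  unfolding cnf_view_def cnf_shift_def by (intro ext) auto

lemma cnf_shift_cancel:
  "cnf_shift l m T0 (\<lambda>i r. x i r - x' i r) (cnf_shift l m T0 (\<lambda>i r. x' i r - x i r) s) = s"
  unfolding cnf_shift_def by (intro ext) simp

lemma card_cnf_view_indep:
  fixes x x' :: "nat \<Rightarrow> nat \<Rightarrow> 'a::ab_group_add"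
  assumes "S \<subseteq> {..<k}" "card S \<le> t" "t \<le> k"
  shows "card {s \<in> cnf_shares k t l m x. cnf_view k t l m S s = v}
       = card {s \<in> cnf_shares k t l m x'. cnf_view k t l m S s = v}"
proof -
  obtain T0 where T0: "T0 \<in> cnf_sets k t" "S \<subseteq> T0"
    using cnf_set_containing[OF assms] .
  have "bij_betw (cnf_shift l m T0 (\<lambda>i r. x' i r - x i r))
          {s \<in> cnf_shares k t l m x. cnf_view k t l m S s = v}
          {s \<in> cnf_shares k t l m x'. cnf_view k t l m S s = v}"
    by (rule bij_betw_byWitness[where f' = "cnf_shift l m T0 (\<lambda>i r. x i r - x' i r)"])
      (use T0 in \<open>auto simp: cnf_shift_cancel cnf_view_shift cnf_shift_shares\<close>)
  then show ?thesis
    by (rule bij_betw_same_card)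
qed

definition avoiding_duals ::
  "nat \<Rightarrow> nat \<Rightarrow> nat \<Rightarrow> nat \<Rightarrow> (nat \<Rightarrow> nat \<Rightarrow> nat \<Rightarrow> 'a::comm_ring_1)
     \<Rightarrow> (nat set \<Rightarrow> nat \<Rightarrow> nat \<Rightarrow> nat \<Rightarrow> 'a) \<Rightarrow> bool" where
  "avoiding_duals k b l n A W \<longleftrightarrow>
     (\<forall>U r. U \<subseteq> {..<k} \<and> card U \<le> n \<and> r < l \<longrightarrow>
        (\<forall>j\<in>U. \<forall>c. W U r j c = 0) \<and>
        (\<forall>s<l. (\<Sum>j<k. \<Sum>c<b. A s j c * W U r j c) = (if s = r then 1 else 0)))"

lemma avoiding_duals_exist:
  fixes A :: "nat \<Rightarrow> nat \<Rightarrow> nat \<Rightarrow> 'a::field"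
  assumes "linear_code k b C" "distance_at_least k C D" "\<forall>s<l. A s \<in> C" "lin_indep_fam l A"
    and "n < D"
  shows "\<exists>W. avoiding_duals k b l n A W"
proof -
  have "\<exists>WU. \<forall>r. U \<subseteq> {..<k} \<and> card U \<le> n \<and> r < l \<longrightarrow>
          (\<forall>j\<in>U. \<forall>c. WU r j c = 0) \<and>
          (\<forall>s<l. (\<Sum>j<k. \<Sum>c<b. A s j c * WU r j c) = (if s = r then 1 else 0))" for U
  proof (cases "U \<subseteq> {..<k} \<and> card U \<le> n")
    case True
    then have "finite U" "card U < D"
      using finite_subset[of U "{..<k}"] \<open>n < D\<close> by simp_all
    from dual_codewords_exist[OF assms(1-4) this] show ?thesis
      by blast
  next
    case False
    then show ?thesis by blast
  qed
  then show ?thesis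
    unfolding avoiding_duals_def by (rule choice[OF allI])
qed

definition exp_slots :: "nat \<Rightarrow> (nat \<Rightarrow> nat) \<Rightarrow> (nat \<times> nat) set" where
  "exp_slots m e = Sigma {..<m} (\<lambda>i. {..<e i})"

lemma finite_exp_slots: "finite (exp_slots m e)"
  unfolding exp_slots_def by simp

lemma card_exp_slots_le: "e \<in> exps d m \<Longrightarrow> card (exp_slots m e) \<le> d"
  unfolding exp_slots_def exps_def by simp

lemma prod_power_sum_expand:
  fixes y :: "nat \<Rightarrow> 'b \<Rightarrow> 'a::comm_semiring_1"
  assumes "finite B"
  shows "(\<Prod>i<m. (\<Sum>T\<in>B. y i T) ^ e i)
       = (\<Sum>\<sigma>\<in>exp_slots m e \<rightarrow>\<^sub>E B. \<Prod>p\<in>exp_slots m e. y (fst p) (\<sigma> p))"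
proof -
  have "(\<Prod>i<m. (\<Sum>T\<in>B. y i T) ^ e i) = (\<Prod>i<m. \<Prod>q<e i. \<Sum>T\<in>B. y i T)"
    by simp
  also have "\<dots> = (\<Prod>p\<in>exp_slots m e. \<Sum>T\<in>B. y (fst p) T)"
    unfolding exp_slots_def by (subst prod.Sigma) (auto simp: case_prod_beta)
  also have "\<dots> = (\<Sum>\<sigma>\<in>exp_slots m e \<rightarrow>\<^sub>E B. \<Prod>p\<in>exp_slots m e. y (fst p) (\<sigma> p))"
    by (rule prod_sum_PiE[OF finite_exp_slots assms])
  finally show ?thesis .
qed

lemma Union_cnf_choice_bound:
  assumes "e \<in> exps d m" "\<sigma> \<in> exp_slots m e \<rightarrow>\<^sub>E cnf_sets k t"
  shows "\<Union>(\<sigma> ` exp_slots m e) \<subseteq> {..<k}" "card (\<Union>(\<sigma> ` exp_slots m e)) \<le> d * t"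
proof -
  have \<sigma>: "\<sigma> p \<subseteq> {..<k}" "card (\<sigma> p) = t" if "p \<in> exp_slots m e" for p
    using assms(2) that unfolding cnf_sets_def by (auto simp: PiE_iff)
  then show "\<Union>(\<sigma> ` exp_slots m e) \<subseteq> {..<k}"
    by blast
  have "card (\<Union>(\<sigma> ` exp_slots m e)) \<le> (\<Sum>p\<in>exp_slots m e. card (\<sigma> p))"
    by (rule card_UN_le[OF finite_exp_slots])
  also have "\<dots> = card (exp_slots m e) * t"
    using \<sigma>(2) by simp
  also have "\<dots> \<le> d * t"
    using card_exp_slots_le[OF assms(1)] by simp
  finally show "card (\<Union>(\<sigma> ` exp_slots m e)) \<le> d * t" .
qed

definition poly_coeffs :: "nat \<Rightarrow> nat \<Rightarrow> ((nat \<Rightarrow> 'a::comm_ring_1) \<Rightarrow> 'a) \<Rightarrow> (nat \<Rightarrow> nat) \<Rightarrow> 'a" where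
  "poly_coeffs d m g = (SOME c. g = (\<lambda>x. \<Sum>e\<in>exps d m. c e * (\<Prod>i<m. x i ^ e i)))"

lemma poly_fun_coeffs:
  assumes "poly_fun d m g"
  shows "g x = (\<Sum>e\<in>exps d m. poly_coeffs d m g e * (\<Prod>i<m. x i ^ e i))"
proof -
  have "g = (\<lambda>x. \<Sum>e\<in>exps d m. poly_coeffs d m g e * (\<Prod>i<m. x i ^ e i))"
    using assms unfolding poly_fun_def poly_coeffs_def by (rule someI_ex)
  then show ?thesis by (rule fun_cong)
qed

definition cnf_poly_eval ::
  "nat \<Rightarrow> nat \<Rightarrow> nat \<Rightarrow> nat \<Rightarrow> nat \<Rightarrow> (nat set \<Rightarrow> nat \<Rightarrow> nat \<Rightarrow> nat \<Rightarrow> 'a::comm_ring_1)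
     \<Rightarrow> nat \<Rightarrow> (nat \<Rightarrow> (nat \<Rightarrow> 'a) \<Rightarrow> 'a) \<Rightarrow> (nat \<Rightarrow> nat \<Rightarrow> nat set \<Rightarrow> 'a) \<Rightarrow> nat \<Rightarrow> 'a" where
  "cnf_poly_eval k t l d m W j f v = (\<lambda>c.
     \<Sum>r<l. \<Sum>e\<in>exps d m. \<Sum>\<sigma>\<in>exp_slots m e \<rightarrow>\<^sub>E cnf_sets k t.
       poly_coeffs d m (f r) e * (\<Prod>p\<in>exp_slots m e. v (fst p) r (\<sigma> p))
       * W (\<Union>(\<sigma> ` exp_slots m e)) r j c)"

lemma cnf_poly_eval_view:
  assumes "avoiding_duals k b l (d * t) A W"
  shows "cnf_poly_eval k t l d m W j f (cnf_view k t l m {j} s) = cnf_poly_eval k t l d m W j f s"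
  unfolding cnf_poly_eval_def
proof (intro ext sum.cong refl)
  fix c r e \<sigma>
  assume r: "r \<in> {..<l}" and e: "e \<in> exps d m" and \<sigma>: "\<sigma> \<in> exp_slots m e \<rightarrow>\<^sub>E cnf_sets k t"
  let ?U = "\<Union>(\<sigma> ` exp_slots m e)"
  show "poly_coeffs d m (f r) e * (\<Prod>p\<in>exp_slots m e. cnf_view k t l m {j} s (fst p) r (\<sigma> p)) * W ?U r j c
      = poly_coeffs d m (f r) e * (\<Prod>p\<in>exp_slots m e. s (fst p) r (\<sigma> p)) * W ?U r j c"
  proof (cases "j \<in> ?U")
    case True
    then have "W ?U r j c = 0"
      using assms Union_cnf_choice_bound[OF e \<sigma>] r unfolding avoiding_duals_def by blast
    then show ?thesis by simp
  next
    case False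
    have "cnf_view k t l m {j} s (fst p) r (\<sigma> p) = s (fst p) r (\<sigma> p)" if "p \<in> exp_slots m e" for p
      using that False r \<sigma> by (auto simp: cnf_view_def exp_slots_def PiE_iff)
    then show ?thesis by simp
  qed
qed

lemma sum_pairing_sum:
  "(\<Sum>j\<in>J. \<Sum>c\<in>B. a j c * (\<Sum>i\<in>I. g i j c)) = (\<Sum>i\<in>I. \<Sum>j\<in>J. \<Sum>c\<in>B. a j c * g i j c)"
  for a :: "'j \<Rightarrow> 'c \<Rightarrow> 'a::comm_semiring_0"
proof -
  have "(\<Sum>j\<in>J. \<Sum>c\<in>B. a j c * (\<Sum>i\<in>I. g i j c)) = (\<Sum>j\<in>J. \<Sum>i\<in>I. \<Sum>c\<in>B. a j c * g i j c)"
    unfolding sum_distrib_left by (rule sum.cong[OF refl], rule sum.swap)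
  also have "\<dots> = (\<Sum>i\<in>I. \<Sum>j\<in>J. \<Sum>c\<in>B. a j c * g i j c)"
    by (rule sum.swap)
  finally show ?thesis .
qed

lemma sum_pairing_scale:
  "(\<Sum>j\<in>J. \<Sum>c\<in>B. a j c * (\<kappa> * g j c)) = \<kappa> * (\<Sum>j\<in>J. \<Sum>c\<in>B. a j c * g j c)"
  for \<kappa> :: "'a::comm_semiring_1"
  by (simp add: sum_distrib_left mult.left_commute)

lemma cnf_poly_eval_decode:
  assumes duals: "avoiding_duals k b l (d * t) A W"
    and "poly_fun d m (f r0)" "s \<in> cnf_shares k t l m x" "r0 < l"
  shows "(\<Sum>j<k. \<Sum>c<b. A r0 j c * cnf_poly_eval k t l d m W j f s c) = f r0 (\<lambda>i. x i r0)"
proof -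
  let ?\<kappa> = "\<lambda>r e \<sigma>. poly_coeffs d m (f r) e * (\<Prod>p\<in>exp_slots m e. s (fst p) r (\<sigma> p))"
  have "(\<Sum>j<k. \<Sum>c<b. A r0 j c * cnf_poly_eval k t l d m W j f s c)
      = (\<Sum>r<l. \<Sum>e\<in>exps d m. \<Sum>\<sigma>\<in>exp_slots m e \<rightarrow>\<^sub>E cnf_sets k t.
           ?\<kappa> r e \<sigma> * (\<Sum>j<k. \<Sum>c<b. A r0 j c * W (\<Union>(\<sigma> ` exp_slots m e)) r j c))"
    unfolding cnf_poly_eval_def by (simp only: sum_pairing_sum sum_pairing_scale)
  also have "\<dots> = (\<Sum>r<l. \<Sum>e\<in>exps d m. \<Sum>\<sigma>\<in>exp_slots m e \<rightarrow>\<^sub>E cnf_sets k t.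
           if r = r0 then ?\<kappa> r e \<sigma> else 0)"
  proof (intro sum.cong refl)
    fix r e \<sigma>
    assume "r \<in> {..<l}" "e \<in> exps d m" "\<sigma> \<in> exp_slots m e \<rightarrow>\<^sub>E cnf_sets k t"
    then show "?\<kappa> r e \<sigma> * (\<Sum>j<k. \<Sum>c<b. A r0 j c * W (\<Union>(\<sigma> ` exp_slots m e)) r j c)
        = (if r = r0 then ?\<kappa> r e \<sigma> else 0)"
      using duals Union_cnf_choice_bound \<open>r0 < l\<close> unfolding avoiding_duals_def by auto
  qed
  also have "\<dots> = (\<Sum>r<l. if r = r0
           then (\<Sum>e\<in>exps d m. \<Sum>\<sigma>\<in>exp_slots m e \<rightarrow>\<^sub>E cnf_sets k t. ?\<kappa> r0 e \<sigma>) else 0)"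
    by (intro sum.cong refl) auto
  also have "\<dots> = (\<Sum>e\<in>exps d m. \<Sum>\<sigma>\<in>exp_slots m e \<rightarrow>\<^sub>E cnf_sets k t. ?\<kappa> r0 e \<sigma>)"
    using \<open>r0 < l\<close> by simp
  also have "\<dots> = (\<Sum>e\<in>exps d m. poly_coeffs d m (f r0) e * (\<Prod>i<m. x i r0 ^ e i))"
  proof (intro sum.cong refl)
    fix e
    have "(\<Prod>i<m. x i r0 ^ e i) = (\<Prod>i<m. (\<Sum>T\<in>cnf_sets k t. s i r0 T) ^ e i)"
      using assms(3) \<open>r0 < l\<close> unfolding cnf_shares_def by simp
    also have "\<dots> = (\<Sum>\<sigma>\<in>exp_slots m e \<rightarrow>\<^sub>E cnf_sets k t. \<Prod>p\<in>exp_slots m e. s (fst p) r0 (\<sigma> p))"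
      by (rule prod_power_sum_expand[OF finite_cnf_sets])
    finally show "(\<Sum>\<sigma>\<in>exp_slots m e \<rightarrow>\<^sub>E cnf_sets k t. ?\<kappa> r0 e \<sigma>)
        = poly_coeffs d m (f r0) e * (\<Prod>i<m. x i r0 ^ e i)"
      by (simp add: sum_distrib_left)
  qed
  also have "\<dots> = f r0 (\<lambda>i. x i r0)"
    using poly_fun_coeffs[OF assms(2)] by simp
  finally show ?thesis .
qed

lemma linear_cnf_hss_cnf_poly_eval:
  fixes A :: "nat \<Rightarrow> nat \<Rightarrow> nat \<Rightarrow> 'a::field"
  assumes "t \<le> k" "avoiding_duals k b l (d * t) A W"
  shows "linear_cnf_hss k t l d m (\<lambda>_. b) (cnf_poly_eval k t l d m W) A"
  unfolding linear_cnf_hss_def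
proof (intro conjI allI impI ballI)
  fix f :: "nat \<Rightarrow> (nat \<Rightarrow> 'a) \<Rightarrow> 'a" and x :: "nat \<Rightarrow> nat \<Rightarrow> 'a" and s r
  assume "\<forall>r<l. poly_fun d m (f r)" "s \<in> cnf_shares k t l m x" "r < l"
  then show "(\<Sum>j<k. \<Sum>c<b. A r j c * cnf_poly_eval k t l d m W j f (cnf_view k t l m {j} s) c)
      = f r (\<lambda>i. x i r)"
    using cnf_poly_eval_decode[OF assms(2)] by (simp add: cnf_poly_eval_view[OF assms(2)])
next
  fix S :: "nat set" and x x' :: "nat \<Rightarrow> nat \<Rightarrow> 'a" and v
  assume "S \<subseteq> {..<k}" "card S \<le> t"
  then show "card {s \<in> cnf_shares k t l m x. cnf_view k t l m S s = v}
      = card {s \<in> cnf_shares k t l m x'. cnf_view k t l m S s = v}"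
    using card_cnf_view_indep assms(1) by blast
qed

theorem mainTheorem5:
  fixes l t k d m b :: nat and C :: "(nat \<Rightarrow> nat \<Rightarrow> 'a::{finite,field}) set"
  assumes "0 < l" "0 < t" "0 < k" "0 < d" "0 < m"
    and "real b > real l / real k"
    and "linear_code k b C"
    and "code_rate k b C \<ge> real l / (real k * real b)"
    and "distance_at_least k C (d * t + 1)"
  shows "\<exists>bs (Eval :: nat \<Rightarrow> (nat \<Rightarrow> (nat \<Rightarrow> 'a) \<Rightarrow> 'a) \<Rightarrow> (nat \<Rightarrow> nat \<Rightarrow> nat set \<Rightarrow> 'a) \<Rightarrow> (nat \<Rightarrow> 'a)) L.
           linear_cnf_hss k t l d m bs Eval L \<and>
           download_rate (real (card (UNIV :: 'a set))) k l bs = real l / (real k * real b) \<and>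
           upload_cost (real (card (UNIV :: 'a set))) k t l m
             = real k * real l * real m * real ((k - 1) choose t) * log 2 (real (card (UNIV :: 'a set)))"
proof -
  have "0 < real l / real k"
    using assms(1,3) by simp
  then have "0 < b"
    using assms(6) by simp
  then have "l \<le> code_dim C"
    using assms(3,8) by (simp add: code_rate_def divide_le_cancel mult.commute)
  then obtain A where A: "\<forall>s<l. A s \<in> C" "lin_indep_fam l A"
    by (rule exists_lin_indep_codewords)
  have "d * t + 1 \<le> k"
    using distance_le_length[OF assms(7,9)] A lin_indep_fam_nonzero assms(1) by blast
  moreover have "t \<le> d * t"
    using assms(4) by simp
  ultimately have "t \<le> k"
    by linarith
  obtain W where "avoiding_duals k b l (d * t) A W"
    using avoiding_duals_exist[OF assms(7,9) A, of "d * t"] by auto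
  then have "linear_cnf_hss k t l d m (\<lambda>_. b) (cnf_poly_eval k t l d m W) A"
    by (rule linear_cnf_hss_cnf_poly_eval[OF \<open>t \<le> k\<close>])
  moreover have "log 2 (real (card (UNIV :: 'a set))) > 0"
    using card_mono[of UNIV "{0, 1 :: 'a}"] by simp
  then have "download_rate (real (card (UNIV :: 'a set))) k l (\<lambda>_. b) = real l / (real k * real b)"
    by (simp add: download_rate_def download_cost_def)
  ultimately show ?thesis
    using upload_cost_eq by blast
qed

end
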